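(* Let $n,m,p,N\in\mathbb{N}_+$, $B\in\mathbb{R}^{n\times m}$, $C\in\mathbb{R}^{p\times n}$ of full column rank, $x_0\in\mathbb{R}^n$, $r_1,\dots,r_N\in\mathbb{R}^p$, $r_0:=Cx_0$, and $\mathcal{S}_{\rm M1}\subseteq\mathbb{R}^{n\times n}\times\mathbb{R}^{m\times N}$. Problem (MOPUL1) is: minimize $\sum_{t=1}^N\|y_t-r_t\|_2$ over $(A,U)\in\mathcal{S}_{\rm M1}$, $U=(u_0,\dots,u_{N-1})$, where $x_t=Ax_{t-1}+Bu_{t-1}$ ($t=1,\dots,N$) and $y_t=Cx_t$; let $v^*_{\rm M1}$ be its optimal value. Problem (AMOPUL1) is: minimize $\sum_{t=1}^N\|CAC^{\dagger}r_{t-1}+CBu_{t-1}-r_t\|_2$ over $(A,U)\in\mathcal{S}_{\rm M1}$; let $v^*_{\rm A1}$ be its optimal value and $\mathcal{F}^*_{\rm A1}$ its optimal solution set. If (AMOPUL1) is attainable (i.e., $\mathcal{F}^*_{\rm A1}\ne\emptyset$), then $$v^*_{\rm M1}\le\Big(\sum_{i=0}^{N-1}(\zeta^* )^i\Big)v^*_{\rm A1},\qquad \zeta^*:=\inf_{(A^{\rm a*},U^{\rm a*})\in\mathcal{F}^*_{\rm A1}}\|CA^{\rm a*}C^{\dagger}\|_2.$$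
   Context: $C^{\dagger}$ is the Moore–Penrose inverse of $C$; $\|\cdot\|_2$ is the Euclidean norm for vectors and the spectral norm for matrices. In the paper $\mathcal{S}_{\rm M1}$ is assumed SD representable, though this is not used in the claim. *)

theory Defs
  imports "HOL-Analysis.Analysis"
begin

definition pinv :: "real^'n^'m \<Rightarrow> real^'m^'n" where
  "pinv M = (THE X. M ** X ** M = M \<and> X ** M ** X = X \<and>
                    transpose (M ** X) = M ** X \<and> transpose (X ** M) = X ** M)"

definition spec_norm :: "real^'n^'m \<Rightarrow> real" where
  "spec_norm M = onorm (\<lambda>x. M *v x)"

primrec traj :: "real^'n^'n \<Rightarrow> real^'m^'n \<Rightarrow> real^'n \<Rightarrow> (nat \<Rightarrow> real^'m) \<Rightarrow> nat \<Rightarrow> real^'n" where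
  "traj A B x0 U 0 = x0"
| "traj A B x0 U (Suc t) = A *v traj A B x0 U t + B *v U t"

definition obj_M1 :: "real^'m^'n \<Rightarrow> real^'n^'p \<Rightarrow> real^'n \<Rightarrow> (nat \<Rightarrow> real^'p) \<Rightarrow> nat
    \<Rightarrow> ((real^'n^'n) \<times> (nat \<Rightarrow> real^'m)) \<Rightarrow> real" where
  "obj_M1 B C x0 r N z = (\<Sum>t=1..N. norm (C *v traj (fst z) B x0 (snd z) t - r t))"

definition ref0 :: "real^'n^'p \<Rightarrow> real^'n \<Rightarrow> (nat \<Rightarrow> real^'p) \<Rightarrow> nat \<Rightarrow> real^'p" where
  "ref0 C x0 r t = (if t = 0 then C *v x0 else r t)"

definition obj_A1 :: "real^'m^'n \<Rightarrow> real^'n^'p \<Rightarrow> real^'n \<Rightarrow> (nat \<Rightarrow> real^'p) \<Rightarrow> nat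
    \<Rightarrow> ((real^'n^'n) \<times> (nat \<Rightarrow> real^'m)) \<Rightarrow> real" where
  "obj_A1 B C x0 r N z = (\<Sum>t=1..N.
      norm ((C ** fst z ** pinv C) *v ref0 C x0 r (t - 1) + (C ** B) *v snd z (t - 1) - r t))"

definition argmin_set :: "('a \<Rightarrow> real) \<Rightarrow> 'a set \<Rightarrow> 'a set" where
  "argmin_set f S = {z \<in> S. \<forall>w \<in> S. f z \<le> f w}"

end

theory Submission
  imports Defs
begin

(* For C of full column rank, pinv C ** C = I, so the tracking error e_t = C x_t - r_t
   obeys e_t = a_t + (C A C^+) e_(t-1), where a_t is the t-th residual of (AMOPUL1), and
   e_0 = 0. Hence |e_t| <= |a_t| + zeta |e_(t-1)| with zeta = |C A C^+|_2, and summing this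
   recurrence bounds the (MOPUL1) objective by (sum_(i<N) zeta^i) times the (AMOPUL1)
   objective. At an optimal solution of (AMOPUL1) the latter equals v*_A1, and since the
   bound is continuous in zeta it survives passing to the infimum zeta*. *)

definition is_pinv :: "real^'n^'m \<Rightarrow> real^'m^'n \<Rightarrow> bool" where
  "is_pinv M X \<longleftrightarrow> M ** X ** M = M \<and> X ** M ** X = X \<and>
     transpose (M ** X) = M ** X \<and> transpose (X ** M) = X ** M"

lemma is_pinv_unique:
  assumes X: "is_pinv M X" and Y: "is_pinv M Y"
  shows "X = Y"
proof -
  have MXM: "M ** X ** M = M" and XMX: "X ** M ** X = X"
    and MX: "transpose (M ** X) = M ** X" and XM: "transpose (X ** M) = X ** M"
    using X by (simp_all add: is_pinv_def)
  have MYM: "M ** Y ** M = M" and YMY: "Y ** M ** Y = Y"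
    and MY: "transpose (M ** Y) = M ** Y" and YM: "transpose (Y ** M) = Y ** M"
    using Y by (simp_all add: is_pinv_def)
  have "X = X ** (M ** X)"
    using XMX by (simp add: matrix_mul_assoc)
  also have "\<dots> = X ** transpose (M ** Y ** (M ** X))"
    using MX MYM by (simp add: matrix_mul_assoc)
  also have "\<dots> = X ** (M ** X) ** (M ** Y)"
    unfolding matrix_transpose_mul[of "M ** Y" "M ** X"] MX MY by (simp add: matrix_mul_assoc)
  also have "\<dots> = X ** M ** Y"
    using XMX by (simp add: matrix_mul_assoc)
  also have "\<dots> = (X ** M) ** (Y ** M) ** Y"
    using YMY by (metis matrix_mul_assoc)
  also have "\<dots> = transpose (Y ** M ** (X ** M)) ** Y"
    unfolding matrix_transpose_mul[of "Y ** M" "X ** M"] XM YM by (simp add: matrix_mul_assoc)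
  also have "\<dots> = (Y ** M) ** Y"
    using MXM YM by (metis matrix_mul_assoc)
  also have "\<dots> = Y"
    using YMY by (simp add: matrix_mul_assoc)
  finally show ?thesis .
qed

lemma pinv_eqI: "is_pinv M X \<Longrightarrow> pinv M = X"
  unfolding pinv_def is_pinv_def[symmetric] using is_pinv_unique by blast

lemma inj_gram_matrix:
  fixes C :: "real^'n^'p"
  assumes "inj ((*v) C)"
  shows "inj ((*v) (transpose C ** C))"
proof (rule injI)
  fix x y
  assume "(transpose C ** C) *v x = (transpose C ** C) *v y"
  then have "inner (x - y) (transpose C *v (C *v (x - y))) = 0"
    by (simp add: matrix_vector_mul_assoc matrix_vector_mult_diff_distrib)
  then have "inner (C *v (x - y)) (C *v (x - y)) = 0"
    by (metis dot_lmul_matrix inner_commute transpose_transpose vector_transpose_matrix)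
  then have "C *v x = C *v y"
    by (simp add: matrix_vector_mult_diff_distrib)
  then show "x = y"
    using assms by (meson injD)
qed

lemma transpose_inverse_of_symmetric:
  fixes G G' :: "real^'n^'n"
  assumes "transpose G = G" and "G' ** G = mat 1"
  shows "transpose G' = G'"
proof -
  have GG': "G ** G' = mat 1"
    using assms(2) matrix_left_right_inverse by blast
  then have "transpose G' ** G = mat 1"
    by (metis assms(1) matrix_transpose_mul transpose_mat)
  then show ?thesis
    by (metis GG' matrix_mul_assoc matrix_mul_lid matrix_mul_rid)
qed

lemma pinv_mult_self_full_column_rank:
  fixes C :: "real^'n^'p"
  assumes "rank C = CARD('n)"
  shows "pinv C ** C = mat 1"
proof -
  define G where "G = transpose C ** C"
  have "inj ((*v) G)"
    using assms inj_gram_matrix full_rank_injective unfolding G_def by blast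
  then obtain G' where G': "G' ** G = mat 1"
    using matrix_left_invertible_injective by blast
  have G'_sym: "transpose G' = G'"
    using G' by (rule transpose_inverse_of_symmetric[rotated]) (simp add: G_def matrix_transpose_mul)
  define X where "X = G' ** transpose C"
  have XC: "X ** C = mat 1"
    using G' by (simp add: X_def G_def matrix_mul_assoc)
  have "is_pinv C X"
    unfolding is_pinv_def
  proof (intro conjI)
    show "C ** X ** C = C"
      by (metis XC matrix_mul_assoc matrix_mul_rid)
    show "transpose (C ** X) = C ** X"
      by (simp add: X_def matrix_transpose_mul G'_sym matrix_mul_assoc)
  qed (simp_all add: XC)
  then show ?thesis
    using XC by (simp add: pinv_eqI)
qed

lemma spec_norm_nonneg: "0 \<le> spec_norm M"
  unfolding spec_norm_def by (rule onorm_pos_le) simp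

lemma norm_matrix_vector_mult_le: "norm (M *v x) \<le> spec_norm M * norm x"
  unfolding spec_norm_def by (rule onorm) simp

lemma sum_le_geometric_sum_mult_of_recurrence:
  fixes e a :: "nat \<Rightarrow> real" and z :: real
  assumes e0: "e 0 = 0" and step: "\<And>t. e (Suc t) \<le> a (Suc t) + z * e t"
    and z: "0 \<le> z" and a: "\<And>t. 0 \<le> a t"
  shows "(\<Sum>t=1..N. e t) \<le> (\<Sum>i<N. z ^ i) * (\<Sum>t=1..N. a t)"
proof (induction N)
  case 0
  then show ?case by simp
next
  case (Suc N)
  have shift: "(\<Sum>t=1..M. f t) = (\<Sum>t<M. f (Suc t))" for M and f :: "nat \<Rightarrow> real"
    by (induction M) auto
  have "(\<Sum>t=1..Suc N. e t) \<le> (\<Sum>t<Suc N. a (Suc t) + z * e t)"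
    unfolding shift by (intro sum_mono step)
  also have "\<dots> = (\<Sum>t=1..Suc N. a t) + z * (\<Sum>t=1..N. e t)"
    by (simp only: sum.distrib sum_distrib_left shift sum.lessThan_Suc_shift e0)
  also have "\<dots> \<le> (\<Sum>t=1..Suc N. a t) + z * ((\<Sum>i<N. z ^ i) * (\<Sum>t=1..Suc N. a t))"
  proof -
    have "(\<Sum>t=1..N. a t) \<le> (\<Sum>t=1..Suc N. a t)"
      using a by (simp add: add_increasing2)
    then have "(\<Sum>t=1..N. e t) \<le> (\<Sum>i<N. z ^ i) * (\<Sum>t=1..Suc N. a t)"
      using Suc.IH z by (meson mult_left_mono order.trans sum_nonneg zero_le_power)
    then show ?thesis
      using z by (simp add: mult_left_mono)
  qed
  also have "\<dots> = (1 + z * (\<Sum>i<N. z ^ i)) * (\<Sum>t=1..Suc N. a t)"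
    by (simp only: distrib_right mult_1_left mult.assoc)
  also have "1 + z * (\<Sum>i<N. z ^ i) = (\<Sum>i<Suc N. z ^ i)"
    by (simp only: sum.lessThan_Suc_shift sum_distrib_left power_Suc power_0)
  finally show ?case .
qed

lemma tracking_error_step:
  fixes A :: "real^'n^'n" and B :: "real^'m^'n" and C :: "real^'n^'p" and L :: "real^'p^'n"
  assumes "L ** C = mat 1"
  defines "M \<equiv> C ** A ** L"
  shows "C *v traj A B x0 U (Suc t) - r (Suc t)
    = (M *v ref0 C x0 r t + (C ** B) *v U t - r (Suc t))
      + M *v (C *v traj A B x0 U t - ref0 C x0 r t)"
proof -
  have "L *v (C *v x) = x" for x
    by (metis assms(1) matrix_vector_mul_assoc matrix_vector_mul_lid)
  then have "M *v (C *v x) = C *v (A *v x)" for x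
    by (simp add: M_def matrix_vector_mul_assoc[symmetric])
  then show ?thesis
    by (simp add: matrix_vector_right_distrib matrix_vector_mult_diff_distrib
        matrix_vector_mul_assoc)
qed

lemma ref0_Suc: "ref0 C x0 r (Suc t) = r (Suc t)"
  by (simp add: ref0_def)

lemma obj_M1_le_geometric_sum_mult_obj_A1:
  fixes B :: "real^'m^'n" and C :: "real^'n^'p"
  assumes "rank C = CARD('n)"
  shows "obj_M1 B C x0 r N (A, U)
    \<le> (\<Sum>i<N. spec_norm (C ** A ** pinv C) ^ i) * obj_A1 B C x0 r N (A, U)"
proof -
  define M where "M = C ** A ** pinv C"
  define e where "e t = C *v traj A B x0 U t - ref0 C x0 r t" for t
  define a where "a t = M *v ref0 C x0 r (t - 1) + (C ** B) *v U (t - 1) - r t" for t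
  have "e (Suc t) = a (Suc t) + M *v e t" for t
    unfolding e_def a_def M_def diff_Suc_1 ref0_Suc
    by (rule tracking_error_step[OF pinv_mult_self_full_column_rank[OF assms]])
  then have "norm (e (Suc t)) \<le> norm (a (Suc t)) + spec_norm M * norm (e t)" for t
    using norm_triangle_ineq[of "a (Suc t)" "M *v e t"] norm_matrix_vector_mult_le[of M "e t"]
    by simp
  then have "(\<Sum>t=1..N. norm (e t)) \<le> (\<Sum>i<N. spec_norm M ^ i) * (\<Sum>t=1..N. norm (a t))"
    by (intro sum_le_geometric_sum_mult_of_recurrence spec_norm_nonneg norm_ge_zero)
      (simp add: e_def ref0_def)
  moreover have "obj_M1 B C x0 r N (A, U) = (\<Sum>t=1..N. norm (e t))"
    unfolding obj_M1_def e_def by (intro sum.cong) (auto simp: ref0_def)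
  moreover have "obj_A1 B C x0 r N (A, U) = (\<Sum>t=1..N. norm (a t))"
    unfolding obj_A1_def a_def M_def by simp
  ultimately show ?thesis
    by (simp add: M_def)
qed

lemma Inf_image_eq_argmin:
  assumes "z \<in> argmin_set f S"
  shows "Inf (f ` S) = f z"
  using assms unfolding argmin_set_def by (intro cInf_eq_minimum) auto

lemma le_at_Inf_of_continuous:
  fixes g :: "real \<Rightarrow> real" and Y :: "real set"
  assumes "continuous_on UNIV g" and "Y \<noteq> {}" and "bdd_below Y"
    and "\<And>y. y \<in> Y \<Longrightarrow> c \<le> g y"
  shows "c \<le> g (Inf Y)"
proof -
  have "closed {y. c \<le> g y}"
    using assms(1) by (intro closed_Collect_le continuous_intros)
  then have "Inf Y \<in> {y. c \<le> g y}"
    using assms(2-4) by (intro closed_subset_contains_Inf) auto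
  then show ?thesis
    by simp
qed

theorem theorem6:
  fixes B :: "real^'m^'n" and C :: "real^'n^'p" and x0 :: "real^'n"
    and r :: "nat \<Rightarrow> real^'p" and N :: nat
    and S :: "((real^'n^'n) \<times> (nat \<Rightarrow> real^'m)) set"
  assumes "N \<ge> 1"
    and "rank C = CARD('n)"
    and "argmin_set (obj_A1 B C x0 r N) S \<noteq> {}"
  shows "Inf (obj_M1 B C x0 r N ` S)
     \<le> (\<Sum>i<N. (Inf ((\<lambda>z. spec_norm (C ** fst z ** pinv C)) ` argmin_set (obj_A1 B C x0 r N) S)) ^ i)
        * Inf (obj_A1 B C x0 r N ` S)"
proof -
  let ?F = "argmin_set (obj_A1 B C x0 r N) S"
  let ?\<zeta> = "\<lambda>z. spec_norm (C ** fst z ** pinv C)"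
  let ?v = "Inf (obj_A1 B C x0 r N ` S)"
  have "Inf (obj_M1 B C x0 r N ` S) \<le> (\<Sum>i<N. y ^ i) * ?v" if "y \<in> ?\<zeta> ` ?F" for y
  proof -
    obtain A U where AU: "(A, U) \<in> ?F" and y: "y = ?\<zeta> (A, U)"
      using \<open>y \<in> ?\<zeta> ` ?F\<close> by auto
    have "bdd_below (obj_M1 B C x0 r N ` S)"
      unfolding obj_M1_def by (intro bdd_belowI[of _ 0]) (auto intro: sum_nonneg)
    then have "Inf (obj_M1 B C x0 r N ` S) \<le> obj_M1 B C x0 r N (A, U)"
      using AU by (intro cInf_lower) (auto simp: argmin_set_def)
    also have "\<dots> \<le> (\<Sum>i<N. y ^ i) * ?v"
      using obj_M1_le_geometric_sum_mult_obj_A1[OF assms(2), of B x0 r N A U]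
      unfolding Inf_image_eq_argmin[OF AU] y by simp
    finally show ?thesis .
  qed
  moreover have "bdd_below (?\<zeta> ` ?F)"
    using spec_norm_nonneg by (intro bdd_belowI[of _ 0]) auto
  ultimately show ?thesis
    using assms(3)
    by (intro le_at_Inf_of_continuous[where g = "\<lambda>y. (\<Sum>i<N. y ^ i) * ?v"] continuous_intros) auto
qed

end
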